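(* Let $W_0$, $W_1$, $W_2$ be the abstract Coxeter groups with the following Coxeter graphs on four nodes: - $W_0=[\infty,3,3]$: linear graph $s_1 - s_2 - s_3 - s_4$ with $m_{12}=\infty$, $m_{23}=m_{34}=3$, all other pairs commuting; - $W_1=[3,\infty,3]$: linear graph $s_1 - s_2 - s_3 - s_4$ with $m_{12}=3$, $m_{23}=\infty$, $m_{34}=3$, all other pairs commuting; - $W_2=[\infty,3^{1,1}]$: a central node $s_2$ joined to $s_1$ by an edge with $m_{12}=\infty$ and to $s_3,s_4$ by edges with $m_{23}=m_{24}=3$, all other pairs commuting. Then their growth rates satisfy $\tau_{W_0}<\tau_{W_1}$ and $\tau_{W_0}<\tau_{W_2}$.
   Context: For a Coxeter system $(W,S)$ (group $W$ generated by a finite set $S$ with relations $s^2=1$ and $(ss')^{m_{ss'}}=1$, $m_{ss'}\in\{2,3,\dots,\infty\}$), the growth series is $f_S(t)=1+\sum_{k\ge1}a_kt^k$ with $a_k$ the number of elements of $S$-word length $k$, and the growth rate $\tau_W$ is the inverse of the radius of convergence of $f_S(t)$ (equivalently $\limsup_k a_k^{1/k}$). *)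

theory Defs
  imports "HOL-Analysis.Analysis" "HOL-Library.Extended_Nat"
begin

text \<open>Generators of a Coxeter system with n generators are 0,...,n-1; words are lists.
  The Coxeter matrix is m :: nat => nat => enat (\<infinity> = no relation).\<close>

fun alt_word :: "nat \<Rightarrow> nat \<Rightarrow> nat \<Rightarrow> nat list" where
  "alt_word s t 0 = []"
| "alt_word s t (Suc k) = s # alt_word t s k"

definition cox_rel :: "nat \<Rightarrow> (nat \<Rightarrow> nat \<Rightarrow> enat) \<Rightarrow> nat list \<Rightarrow> bool" where
  "cox_rel n m r \<longleftrightarrow>
     (\<exists>s<n. r = [s, s]) \<or>
     (\<exists>s<n. \<exists>t<n. \<exists>k::nat. s \<noteq> t \<and> m s t = enat k \<and> r = alt_word s t (2 * k))"

inductive cox_eq :: "nat \<Rightarrow> (nat \<Rightarrow> nat \<Rightarrow> enat) \<Rightarrow> nat list \<Rightarrow> nat list \<Rightarrow> bool"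
  for n m where
  refl: "cox_eq n m w w"
| sym: "cox_eq n m u v \<Longrightarrow> cox_eq n m v u"
| trans: "cox_eq n m u v \<Longrightarrow> cox_eq n m v w \<Longrightarrow> cox_eq n m u w"
| rel: "cox_rel n m r \<Longrightarrow> cox_eq n m (u @ r @ v) (u @ v)"

definition cox_words :: "nat \<Rightarrow> nat list set" where
  "cox_words n = lists {..<n}"

definition cox_elem :: "nat \<Rightarrow> (nat \<Rightarrow> nat \<Rightarrow> enat) \<Rightarrow> nat list \<Rightarrow> nat list set" where
  "cox_elem n m w = {v \<in> cox_words n. cox_eq n m v w}"

definition growth_coeff :: "nat \<Rightarrow> (nat \<Rightarrow> nat \<Rightarrow> enat) \<Rightarrow> nat \<Rightarrow> nat" where
  "growth_coeff n m k = card (cox_elem n m `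
      {w \<in> cox_words n. length w = k \<and> (\<forall>v \<in> cox_words n. cox_eq n m v w \<longrightarrow> k \<le> length v)})"

text \<open>Growth rate: limsup of a_k^(1/k) (= inverse radius of convergence of the growth series).\<close>
definition growth_rate :: "nat \<Rightarrow> (nat \<Rightarrow> nat \<Rightarrow> enat) \<Rightarrow> ereal" where
  "growth_rate n m = limsup (\<lambda>k. ereal (root k (real (growth_coeff n m k))))"

text \<open>Coxeter matrices (off-diagonal entries) of the three groups; s_1..s_4 are 0..3.\<close>
definition m_W0 :: "nat \<Rightarrow> nat \<Rightarrow> enat" where
  "m_W0 i j = (if {i, j} = {0, 1} then \<infinity>
               else if {i, j} = {1, 2} \<or> {i, j} = {2, 3} then 3 else 2)"

definition m_W1 :: "nat \<Rightarrow> nat \<Rightarrow> enat" where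
  "m_W1 i j = (if {i, j} = {1, 2} then \<infinity>
               else if {i, j} = {0, 1} \<or> {i, j} = {2, 3} then 3 else 2)"

definition m_W2 :: "nat \<Rightarrow> nat \<Rightarrow> enat" where
  "m_W2 i j = (if {i, j} = {0, 1} then \<infinity>
               else if {i, j} = {1, 2} \<or> {i, j} = {1, 3} then 3 else 2)"

end

theory Submission
  imports Defs "HOL-Library.Sublist"
begin

text \<open>
  W1 and W2 act on integer vectors through the contragredient of their geometric
  representations, and in each case four words of lengths 2, 3, 3, 4 play ping-pong on four
  disjoint cones. Concatenations of these blocks are therefore distinct group elements, and the
  number c_k of such concatenations of total length k, a lower bound for the ball of radius k,
  satisfies c_k = c_(k-2) + 2 c_(k-3) + c_(k-4). This forces growth rate at least 8/5.

  For W0, the shortlex-least representative of an element avoids fourteen factors, each of which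
  equals a shortlex-smaller word in W0. The words avoiding them are accepted by a 13-state
  automaton whose transition matrix M admits a weight vector w \<ge> 1 with M w \<le> (31/20) w, so there
  are at most 1000 (31/20)^k elements of length k and the growth rate of W0 is at most 31/20.
\<close>

section \<open>Words and group elements\<close>

lemma cox_eq_append_context:
  "cox_eq n m u v \<Longrightarrow> cox_eq n m (x @ u @ y) (x @ v @ y)"
proof (induction rule: cox_eq.induct)
  case (refl w)
  show ?case by (rule cox_eq.refl)
next
  case (sym u v)
  show ?case using sym.IH by (rule cox_eq.sym)
next
  case (trans u v w)
  show ?case using trans.IH by (rule cox_eq.trans)
next
  case (rel r u v)
  show ?case using cox_eq.rel[OF rel, of "x @ u" "v @ y"] by simp
qed

lemma cox_eq_rev_cancel: "v \<in> cox_words n \<Longrightarrow> cox_eq n m (v @ rev v) []"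
proof (induction v)
  case (Cons a v)
  have "cox_eq n m ([a] @ (v @ rev v) @ [a]) ([a] @ [] @ [a])"
    using Cons by (intro cox_eq_append_context) (simp add: cox_words_def)
  then have "cox_eq n m ((a # v) @ rev (a # v)) [a, a]"
    by simp
  moreover have "cox_eq n m [a, a] []"
    using Cons.prems cox_eq.rel[of n m "[a, a]" "[]" "[]"] by (simp add: cox_rel_def cox_words_def)
  ultimately show ?case by (rule cox_eq.trans)
qed (simp add: cox_eq.refl)

lemma cox_eq_relator_split:
  assumes "cox_rel n m (u @ v)" "v \<in> cox_words n"
  shows "cox_eq n m u (rev v)"
proof -
  have "cox_eq n m (u @ (v @ rev v) @ []) (u @ [] @ [])"
    using cox_eq_rev_cancel[OF assms(2)] by (rule cox_eq_append_context)
  then have "cox_eq n m u (u @ v @ rev v)"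
    by (simp add: cox_eq.sym)
  moreover have "cox_eq n m ([] @ (u @ v) @ rev v) ([] @ rev v)"
    using assms(1) by (rule cox_eq.rel)
  then have "cox_eq n m (u @ v @ rev v) (rev v)"
    by simp
  ultimately show ?thesis by (rule cox_eq.trans)
qed

lemma cox_rel_alt_word:
  "s < n \<Longrightarrow> t < n \<Longrightarrow> s \<noteq> t \<Longrightarrow> m s t = enat k \<Longrightarrow> cox_rel n m (alt_word s t (2 * k))"
  unfolding cox_rel_def by blast

lemma cox_eq_commute:
  assumes "s < n" "t < n" "s \<noteq> t" "m s t = 2"
  shows "cox_eq n m [s, t] [t, s]"
proof -
  have "cox_rel n m (alt_word s t (2 * 2))"
    using assms by (intro cox_rel_alt_word) (simp_all add: numeral_eq_enat)
  then have "cox_rel n m ([s, t] @ [s, t])"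
    by (simp add: numeral_eq_Suc)
  from cox_eq_relator_split[OF this] show ?thesis using assms by (simp add: cox_words_def)
qed

lemma cox_eq_braid:
  assumes "s < n" "t < n" "s \<noteq> t" "m s t = 3"
  shows "cox_eq n m [s, t, s] [t, s, t]"
proof -
  have "cox_rel n m (alt_word s t (2 * 3))"
    using assms by (intro cox_rel_alt_word) (simp_all add: numeral_eq_enat)
  then have "cox_rel n m ([s, t, s] @ [t, s, t])"
    by (simp add: numeral_eq_Suc)
  from cox_eq_relator_split[OF this] show ?thesis using assms by (simp add: cox_words_def)
qed

lemma cox_elem_cong:
  assumes "cox_eq n m u v"
  shows "cox_elem n m u = cox_elem n m v"
proof -
  have "cox_eq n m x u \<longleftrightarrow> cox_eq n m x v" for x
    using assms cox_eq.trans cox_eq.sym by metis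
  then show ?thesis by (simp add: cox_elem_def)
qed

lemma cox_eq_if_cox_elem_eq:
  "u \<in> cox_words n \<Longrightarrow> cox_elem n m u = cox_elem n m v \<Longrightarrow> cox_eq n m u v"
  unfolding cox_elem_def using cox_eq.refl by blast

lemma foldr_eq_if_cox_eq:
  assumes "\<And>r x. cox_rel n m r \<Longrightarrow> foldr act r x = x"
  shows "cox_eq n m u v \<Longrightarrow> foldr act u = foldr act v"
  by (induction rule: cox_eq.induct) (auto simp: assms fun_eq_iff)

lemma finite_cox_words_length_le: "finite {w \<in> cox_words n. length w \<le> k}"
  using finite_lists_length_le[of "{..<n}" k] by (simp add: cox_words_def lists_eq_set)

definition reduced_words :: "nat \<Rightarrow> (nat \<Rightarrow> nat \<Rightarrow> enat) \<Rightarrow> nat \<Rightarrow> nat list set" where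
  "reduced_words n m k =
     {w \<in> cox_words n. length w = k \<and> (\<forall>v \<in> cox_words n. cox_eq n m v w \<longrightarrow> k \<le> length v)}"

lemma growth_coeff_eq_card_reduced_words:
  "growth_coeff n m k = card (cox_elem n m ` reduced_words n m k)"
  by (simp add: growth_coeff_def reduced_words_def)

lemma finite_reduced_words: "finite (reduced_words n m k)"
  by (rule finite_subset[OF _ finite_cox_words_length_le[of n k]]) (auto simp: reduced_words_def)

lemma shortlex_min_rep:
  assumes "w \<in> cox_words n"
  obtains v where "v \<in> reduced_words n m (length v)" "cox_eq n m v w" "length v \<le> length w"
    "\<And>u. u \<in> cox_words n \<Longrightarrow> cox_eq n m u w \<Longrightarrow> (u, v) \<notin> lenlex less_than"
proof -
  define C where "C = {v \<in> cox_words n. cox_eq n m v w}"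
  have "w \<in> C" using assms by (simp add: C_def cox_eq.refl)
  then obtain v where v: "v \<in> C" and least: "\<And>u. (u, v) \<in> lenlex less_than \<Longrightarrow> u \<notin> C"
    by (rule wfE_min[OF wf_lenlex[OF wf_less_than]]) auto
  have shortest: "length v \<le> length u" if "u \<in> C" for u
  proof (rule ccontr)
    assume "\<not> length v \<le> length u"
    then have "(u, v) \<in> lenlex less_than" by (simp add: lenlex_conv)
    with least that show False by blast
  qed
  show thesis
  proof (rule that)
    show "v \<in> reduced_words n m (length v)"
      using v shortest cox_eq.trans[of n m _ v w] by (simp add: C_def reduced_words_def)
    show "cox_eq n m v w" using v by (simp add: C_def)
    show "length v \<le> length w" using shortest \<open>w \<in> C\<close> .
    show "(u, v) \<notin> lenlex less_than" if "u \<in> cox_words n" "cox_eq n m u w" for u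
      using least[of u] that by (auto simp: C_def)
  qed
qed

lemma card_ball_le_sum_growth_coeff:
  "card (cox_elem n m ` {w \<in> cox_words n. length w \<le> k}) \<le> (\<Sum>j\<le>k. growth_coeff n m j)"
proof -
  have "cox_elem n m ` {w \<in> cox_words n. length w \<le> k} \<subseteq> (\<Union>j\<le>k. cox_elem n m ` reduced_words n m j)"
  proof clarify
    fix w assume "w \<in> cox_words n" "length w \<le> k"
    then obtain v where "v \<in> reduced_words n m (length v)" "cox_eq n m v w" "length v \<le> k"
      by (metis shortlex_min_rep order_trans)
    moreover from this have "cox_elem n m w = cox_elem n m v"
      using cox_elem_cong by metis
    ultimately show "cox_elem n m w \<in> (\<Union>j\<le>k. cox_elem n m ` reduced_words n m j)"
      by blast
  qed
  then have "card (cox_elem n m ` {w \<in> cox_words n. length w \<le> k})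
      \<le> card (\<Union>j\<le>k. cox_elem n m ` reduced_words n m j)"
    by (intro card_mono) (auto intro: finite_reduced_words)
  also have "\<dots> \<le> (\<Sum>j\<le>k. card (cox_elem n m ` reduced_words n m j))"
    by (rule card_UN_le) simp
  finally show ?thesis by (simp add: growth_coeff_eq_card_reduced_words)
qed

section \<open>Growth rate from counting\<close>

lemma growth_rate_le:
  assumes upper: "\<And>k. real (growth_coeff n m k) \<le> C * c ^ k" and "0 < C" "0 \<le> c"
  shows "growth_rate n m \<le> ereal c"
proof -
  have "eventually (\<lambda>k. ereal (root k (real (growth_coeff n m k))) \<le> ereal (root k C * c))
      sequentially"
    unfolding eventually_sequentially
  proof (intro exI allI impI)
    fix k :: nat assume "1 \<le> k"
    then have "root k (real (growth_coeff n m k)) \<le> root k (C * c ^ k)"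
      using upper by (simp add: real_root_le_mono)
    also have "\<dots> = root k C * c"
      using \<open>1 \<le> k\<close> \<open>0 \<le> c\<close> by (simp add: real_root_mult real_root_power_cancel)
    finally show "ereal (root k (real (growth_coeff n m k))) \<le> ereal (root k C * c)" by simp
  qed
  then have "growth_rate n m \<le> limsup (\<lambda>k. ereal (root k C * c))"
    unfolding growth_rate_def by (rule Limsup_mono)
  also have "\<dots> = ereal c"
    using \<open>0 < C\<close>
    by (intro lim_imp_Limsup tendsto_ereal) (auto intro!: tendsto_eq_intros LIMSEQ_root_const)
  finally show ?thesis .
qed

lemma sum_le_geometric_if_root_less:
  fixes a :: "nat \<Rightarrow> real"
  assumes nonneg: "\<And>j. 0 \<le> a j" and "1 < d" and root_less: "\<And>j. J \<le> j \<Longrightarrow> root j (a j) < d"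
  shows "(\<Sum>j\<le>k. a j) \<le> (\<Sum>j\<le>J. a j) + d ^ Suc k / (d - 1)"
proof -
  have small: "a j \<le> d ^ j" if "Suc J \<le> j" for j
  proof -
    have "a j = root j (a j) ^ j" using that nonneg by (simp add: real_root_pow_pos2)
    also have "\<dots> \<le> d ^ j" using root_less[of j] that nonneg by (intro power_mono) auto
    finally show ?thesis .
  qed
  have "(\<Sum>j\<le>k. a j) \<le> (\<Sum>j \<in> {..J} \<union> {Suc J..k}. a j)"
    using nonneg by (intro sum_mono2) auto
  also have "\<dots> = (\<Sum>j\<le>J. a j) + (\<Sum>j=Suc J..k. a j)"
    by (subst sum.union_disjoint) auto
  also have "(\<Sum>j=Suc J..k. a j) \<le> (\<Sum>j<Suc k. d ^ j)"
    using small \<open>1 < d\<close> by (intro order_trans[OF sum_mono sum_mono2]) auto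
  also have "\<dots> = (d ^ Suc k - 1) / (d - 1)"
    using \<open>1 < d\<close> by (intro geometric_sum) simp
  also have "\<dots> \<le> d ^ Suc k / (d - 1)"
    using \<open>1 < d\<close> by (simp add: divide_right_mono)
  finally show ?thesis by simp
qed

lemma growth_rate_ge:
  assumes "0 < C" "1 < c"
    and lower: "\<And>k. K \<le> k \<Longrightarrow> C * c ^ k \<le> (\<Sum>j\<le>k. real (growth_coeff n m j))"
  shows "ereal c \<le> growth_rate n m"
proof (rule ccontr)
  let ?a = "\<lambda>j. real (growth_coeff n m j)"
  assume "\<not> ereal c \<le> growth_rate n m"
  then obtain d0 where "growth_rate n m < ereal d0" "d0 < c"
    using ereal_dense2 by (metis less_ereal.simps(1) not_le)
  define d where "d = max d0 ((1 + c) / 2)"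
  have "1 < d" "d < c"
    using \<open>d0 < c\<close> \<open>1 < c\<close> by (auto simp: d_def less_max_iff_disj)
  have "growth_rate n m < ereal d"
    using \<open>growth_rate n m < ereal d0\<close> by (rule less_le_trans) (simp add: d_def)
  then have "eventually (\<lambda>j. ereal (root j (?a j)) < ereal d) sequentially"
    unfolding growth_rate_def by (intro Limsup_lessD)
  then obtain J where "\<And>j. J \<le> j \<Longrightarrow> root j (?a j) < d"
    by (auto simp: eventually_sequentially)
  define A where "A = (\<Sum>j\<le>J. ?a j)"
  have partial_sums: "(\<Sum>j\<le>k. ?a j) \<le> A + d ^ Suc k / (d - 1)" for k
    unfolding A_def using \<open>1 < d\<close> \<open>\<And>j. J \<le> j \<Longrightarrow> root j (?a j) < d\<close>
    by (intro sum_le_geometric_if_root_less) auto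
  have "(\<lambda>k. A * (1 / c) ^ k + d / (d - 1) * (d / c) ^ k) \<longlonglongrightarrow> A * 0 + d / (d - 1) * 0"
    using \<open>1 < c\<close> \<open>1 < d\<close> \<open>d < c\<close> by (intro tendsto_intros LIMSEQ_power_zero) auto
  then have "eventually (\<lambda>k. A * (1 / c) ^ k + d / (d - 1) * (d / c) ^ k < C) sequentially"
    using \<open>0 < C\<close> by (intro order_tendstoD) simp_all
  then obtain k0 where k0: "\<And>k. k0 \<le> k \<Longrightarrow> A * (1 / c) ^ k + d / (d - 1) * (d / c) ^ k < C"
    by (auto simp: eventually_sequentially)
  define k where "k = max K k0"
  have "C * c ^ k \<le> A + d ^ Suc k / (d - 1)"
    using lower[of k] partial_sums[of k] by (simp add: k_def)
  then have "C \<le> (A + d ^ Suc k / (d - 1)) / c ^ k"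
    using \<open>1 < c\<close> by (simp add: pos_le_divide_eq)
  also have "\<dots> = A * (1 / c) ^ k + d / (d - 1) * (d / c) ^ k"
    by (simp add: add_divide_distrib power_divide)
  finally show False using k0[of k] by (simp add: k_def)
qed

lemma recurrence_lower_bound:
  fixes Q :: "nat \<Rightarrow> nat"
  assumes Q0: "1 \<le> Q 0" and Q2: "Q 0 \<le> Q 2" and Q3: "2 * Q 0 \<le> Q 3"
    and rec: "\<And>j. Q (j + 2) + 2 * Q (j + 1) + Q j \<le> Q (j + 4)"
  shows "2 \<le> k \<Longrightarrow> (8/5) ^ k \<le> 4 * real (Q k)"
proof (induction k rule: less_induct)
  case (less k)
  have Q4: "2 \<le> Q 4" using rec[of 0] Q0 Q2 by (simp add: numeral_eq_Suc)
  have Q5: "4 \<le> Q 5" using rec[of 1] Q0 Q2 Q3 by (simp add: numeral_eq_Suc)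
  consider "k = 2" | "k = 3" | "k = 4" | "k = 5" | "6 \<le> k" using less.prems by linarith
  then show ?case
  proof cases
    case 1
    have "(8/5::real) ^ 2 \<le> 4 * 1" "(1::real) \<le> Q 2" using Q0 Q2 by (simp_all add: power2_eq_square)
    then show ?thesis unfolding 1 by linarith
  next
    case 2
    have "(8/5::real) ^ 3 \<le> 4 * 2" "(2::real) \<le> Q 3" using Q0 Q3 by (simp_all add: power_divide)
    then show ?thesis unfolding 2 by linarith
  next
    case 3
    have "(8/5::real) ^ 4 \<le> 4 * 2" "(2::real) \<le> Q 4" using Q4 by (simp_all add: power_divide)
    then show ?thesis unfolding 3 by linarith
  next
    case 4
    have "(8/5::real) ^ 5 \<le> 4 * 4" "(4::real) \<le> Q 5" using Q5 by (simp_all add: power_divide)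
    then show ?thesis unfolding 4 by linarith
  next
    case 5
    define j where "j = k - 4"
    have k: "k = j + 4" "2 \<le> j" using 5 by (simp_all add: j_def)
    have "(8/5) ^ k = (8/5::real) ^ j * (4096/625)" by (simp add: k power_add power_divide)
    also have "\<dots> \<le> (8/5) ^ (j + 2) + 2 * (8/5) ^ (j + 1) + (8/5) ^ j"
      by (simp add: power_add)
    also have "\<dots> \<le> 4 * real (Q (j + 2)) + 2 * (4 * real (Q (j + 1))) + 4 * real (Q j)"
      using less.IH[of "j + 2"] less.IH[of "j + 1"] less.IH[of j] k by simp
    also have "\<dots> \<le> 4 * real (Q k)"
      using rec[of j] unfolding k(1) by linarith
    finally show ?thesis .
  qed
qed

section \<open>Ping-pong lower bound\<close>

locale ping_pong =
  fixes n :: nat and m :: "nat \<Rightarrow> nat \<Rightarrow> enat" and act :: "nat \<Rightarrow> 'a \<Rightarrow> 'a"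
    and P :: "'p set" and blk :: "'p \<Rightarrow> nat list" and region :: "'p \<Rightarrow> 'a set" and base :: 'a
  assumes act_cox_rel: "cox_rel n m r \<Longrightarrow> foldr act r x = x"
    and finite_blocks: "finite P"
    and blk_cox_word: "p \<in> P \<Longrightarrow> blk p \<in> cox_words n"
    and blk_nonempty: "p \<in> P \<Longrightarrow> blk p \<noteq> []"
    and blk_maps_region: "p \<in> P \<Longrightarrow> q \<in> P \<Longrightarrow> x \<in> region q \<Longrightarrow> foldr act (blk p) x \<in> region p"
    and blk_maps_base: "p \<in> P \<Longrightarrow> foldr act (blk p) base \<in> region p"
    and regions_disjoint: "p \<in> P \<Longrightarrow> q \<in> P \<Longrightarrow> p \<noteq> q \<Longrightarrow> region p \<inter> region q = {}"
begin

lemma foldr_act_cancel: "w \<in> cox_words n \<Longrightarrow> foldr act w x = foldr act w y \<Longrightarrow> x = y"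
proof (induction w)
  case (Cons s w)
  have "s < n" using Cons.prems by (simp add: cox_words_def)
  then have involution: "act s (act s z) = z" for z
    using act_cox_rel[of "[s, s]" z] by (simp add: cox_rel_def)
  have "act s (foldr act w x) = act s (foldr act w y)" using Cons.prems(2) by simp
  then have "foldr act w x = foldr act w y" using involution by metis
  then show ?case using Cons by (simp add: cox_words_def)
qed simp

definition block_word :: "'p list \<Rightarrow> nat list" where
  "block_word ps = concat (map blk ps)"

lemma block_word_simps [simp]:
  "block_word [] = []" "block_word (p # ps) = blk p @ block_word ps"
  by (simp_all add: block_word_def)

lemma block_word_in_cox_words: "ps \<in> lists P \<Longrightarrow> block_word ps \<in> cox_words n"
  using blk_cox_word by (force simp: block_word_def cox_words_def)

lemma length_le_length_block_word: "ps \<in> lists P \<Longrightarrow> length ps \<le> length (block_word ps)"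
proof (induction ps)
  case (Cons p ps)
  then have "0 < length (blk p)" "length ps \<le> length (block_word ps)"
    using blk_nonempty by simp_all
  then show ?case by (simp del: length_greater_0_conv)
qed simp

lemma block_word_base_in_region:
  "ps \<in> lists P \<Longrightarrow> ps \<noteq> [] \<Longrightarrow> foldr act (block_word ps) base \<in> region (hd ps)"
proof (induction ps)
  case (Cons p ps)
  show ?case
  proof (cases "ps = []")
    case True
    then show ?thesis using Cons.prems blk_maps_base by simp
  next
    case False
    have p: "p \<in> P" "ps \<in> lists P" using Cons.prems by simp_all
    then have "foldr act (block_word ps) base \<in> region (hd ps)" "hd ps \<in> P"
      using Cons.IH False by (auto intro: hd_in_set)
    then have "foldr act (blk p) (foldr act (block_word ps) base) \<in> region p"
      using p(1) by (intro blk_maps_region)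
    then show ?thesis by simp
  qed
qed simp

lemma block_word_inj:
  "ps \<in> lists P \<Longrightarrow> qs \<in> lists P \<Longrightarrow> length (block_word ps) = length (block_word qs)
    \<Longrightarrow> foldr act (block_word ps) base = foldr act (block_word qs) base \<Longrightarrow> ps = qs"
proof (induction ps arbitrary: qs)
  case Nil
  then show ?case using length_le_length_block_word[of qs] by simp
next
  case (Cons p ps)
  have p: "p \<in> P" "ps \<in> lists P" and qs_in: "qs \<in> lists P"
    and len: "length (blk p @ block_word ps) = length (block_word qs)"
    and eq: "foldr act (blk p @ block_word ps) base = foldr act (block_word qs) base"
    using Cons.prems by simp_all
  then have "qs \<noteq> []" using blk_nonempty[of p] by auto
  then obtain q qs' where qs: "qs = q # qs'" by (cases qs) auto
  with qs_in have q: "q \<in> P" "qs' \<in> lists P" by simp_all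
  have "foldr act (block_word (p # ps)) base \<in> region p \<inter> region q"
    using block_word_base_in_region[of "p # ps"] block_word_base_in_region[of qs] p qs_in eq qs
    by simp
  then have "p = q" using regions_disjoint[OF p(1) q(1)] by blast
  then have "foldr act (blk p) (foldr act (block_word ps) base)
      = foldr act (blk p) (foldr act (block_word qs') base)"
    using eq qs by simp
  then have "foldr act (block_word ps) base = foldr act (block_word qs') base"
    using blk_cox_word[OF p(1)] by (rule foldr_act_cancel[rotated])
  then have "ps = qs'" using Cons.IH[of qs'] p q len qs \<open>p = q\<close> by simp
  then show ?case using qs \<open>p = q\<close> by simp
qed

definition block_seqs :: "nat \<Rightarrow> 'p list set" where
  "block_seqs k = {ps \<in> lists P. length (block_word ps) = k}"

lemma finite_block_seqs: "finite (block_seqs k)"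
proof (rule finite_subset)
  show "block_seqs k \<subseteq> {ps. set ps \<subseteq> P \<and> length ps \<le> k}"
  proof
    fix ps assume "ps \<in> block_seqs k"
    then have "ps \<in> lists P" "length (block_word ps) = k" by (simp_all add: block_seqs_def)
    then show "ps \<in> {ps. set ps \<subseteq> P \<and> length ps \<le> k}"
      using length_le_length_block_word[of ps] by auto
  qed
  show "finite {ps. set ps \<subseteq> P \<and> length ps \<le> k}"
    using finite_blocks by (rule finite_lists_length_le)
qed

lemma block_seqs_0: "block_seqs 0 = {[]}"
proof (intro equalityI subsetI)
  fix ps assume "ps \<in> block_seqs 0"
  then show "ps \<in> {[]}"
    using length_le_length_block_word[of ps] by (simp add: block_seqs_def)
qed (simp add: block_seqs_def)

lemma card_block_seqs_rec:
  "(\<Sum>p | p \<in> P \<and> length (blk p) \<le> k. card (block_seqs (k - length (blk p)))) \<le> card (block_seqs k)"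
proof -
  let ?I = "{p. p \<in> P \<and> length (blk p) \<le> k}"
  have "(\<Sum>p\<in>?I. card (block_seqs (k - length (blk p))))
      = (\<Sum>p\<in>?I. card (Cons p ` block_seqs (k - length (blk p))))"
    by (rule sum.cong[OF HOL.refl], rule card_image[symmetric]) (simp add: inj_on_def)
  also have "\<dots> = card (\<Union>p\<in>?I. Cons p ` block_seqs (k - length (blk p)))"
    using finite_blocks
    by (intro card_UN_disjoint[symmetric]) (simp_all add: finite_block_seqs, blast)
  also have "\<dots> \<le> card (block_seqs k)"
    by (intro card_mono finite_block_seqs) (auto simp: block_seqs_def)
  finally show ?thesis .
qed

lemma card_block_seqs_le_sum_growth_coeff:
  "card (block_seqs k) \<le> (\<Sum>j\<le>k. growth_coeff n m j)"
proof -
  let ?elem = "\<lambda>ps. cox_elem n m (block_word ps)"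
  have "inj_on ?elem (block_seqs k)"
  proof (rule inj_onI)
    fix ps qs assume ps: "ps \<in> block_seqs k" and qs: "qs \<in> block_seqs k" and "?elem ps = ?elem qs"
    then have "cox_eq n m (block_word ps) (block_word qs)"
      by (intro cox_eq_if_cox_elem_eq block_word_in_cox_words) (simp_all add: block_seqs_def)
    with act_cox_rel have "foldr act (block_word ps) = foldr act (block_word qs)"
      by (rule foldr_eq_if_cox_eq)
    then show "ps = qs" using ps qs by (intro block_word_inj) (auto simp: block_seqs_def)
  qed
  moreover have "?elem ` block_seqs k \<subseteq> cox_elem n m ` {w \<in> cox_words n. length w \<le> k}"
    by (auto simp: block_seqs_def intro: block_word_in_cox_words)
  ultimately have "card (block_seqs k) \<le> card (cox_elem n m ` {w \<in> cox_words n. length w \<le> k})"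
    by (intro card_inj_on_le finite_imageI finite_cox_words_length_le)
  also have "\<dots> \<le> (\<Sum>j\<le>k. growth_coeff n m j)"
    by (rule card_ball_le_sum_growth_coeff)
  finally show ?thesis .
qed

end

lemma less_4_cases: "(p::nat) < 4 \<longleftrightarrow> p = 0 \<or> p = 1 \<or> p = 2 \<or> p = 3"
  by auto

lemma ping_pong_growth_rate_ge:
  assumes "ping_pong n m act {..<4} blk region base"
    and "map (\<lambda>p. length (blk p)) [0..<4] = [2, 3, 3, 4]"
  shows "ereal (8/5) \<le> growth_rate n m"
proof -
  interpret ping_pong n m act "{..<4::nat}" blk region base by (fact assms(1))
  have len: "length (blk 0) = 2" "length (blk 1) = 3" "length (blk 2) = 3" "length (blk 3) = 4"
    using assms(2) by (simp_all add: upt_rec numeral_eq_Suc)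
  define Q where "Q k = card (block_seqs k)" for k
  have rec: "(\<Sum>p | p < 4 \<and> length (blk p) \<le> k. Q (k - length (blk p))) \<le> Q k" for k
    using card_block_seqs_rec[of k] by (simp add: Q_def)
  have "{p. p < 4 \<and> length (blk p) \<le> 2} = {0}" "{p. p < 4 \<and> length (blk p) \<le> 3} = {0, 1, 2}"
    "{p. p < 4 \<and> length (blk p) \<le> j + 4} = {0, 1, 2, 3}" for j
    using len by (auto simp: less_4_cases)
  then have "Q 0 \<le> Q 2" "2 * Q 0 \<le> Q 3" "Q (j + 2) + 2 * Q (j + 1) + Q j \<le> Q (j + 4)" for j
    using rec[of 2] rec[of 3] rec[of "j + 4"] len by simp_all
  moreover have "1 \<le> Q 0" by (simp add: Q_def block_seqs_0)
  ultimately have lower: "(8/5) ^ k \<le> 4 * real (Q k)" if "2 \<le> k" for k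
    using recurrence_lower_bound that by blast
  have upper: "real (Q k) \<le> (\<Sum>j\<le>k. real (growth_coeff n m j))" for k
    unfolding Q_def of_nat_sum[symmetric] of_nat_le_iff
    by (rule card_block_seqs_le_sum_growth_coeff)
  show ?thesis
  proof (rule growth_rate_ge[where C = "1/4" and K = 2])
    show "1/4 * (8/5) ^ k \<le> (\<Sum>j\<le>k. real (growth_coeff n m j))" if "2 \<le> k" for k
      using lower[OF that] upper[of k] by linarith
  qed simp_all
qed

section \<open>Ping-pong for W1 and W2\<close>

text \<open>The contragredient of Tits' geometric representation, in the basis dual to the simple roots:
  s negates coordinate s and adds 2 cos(pi/m_st) times it to every other coordinate t. These
  coefficients are integers exactly for m_st \<in> {2, 3, \<infinity>}.\<close>

definition geom_coeff :: "enat \<Rightarrow> int" where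
  "geom_coeff k = (if k = 3 then 1 else if k = \<infinity> then 2 else 0)"

definition geom_act :: "(nat \<Rightarrow> nat \<Rightarrow> enat) \<Rightarrow> nat \<Rightarrow> (nat \<Rightarrow> int) \<Rightarrow> nat \<Rightarrow> int" where
  "geom_act m s x t = (if t = s then - x s else x t + geom_coeff (m s t) * x s)"

lemma geom_act_cox_rel:
  assumes sym: "\<And>s t. m s t = m t s" and entries: "\<And>s t. s \<noteq> t \<Longrightarrow> m s t \<in> {2, 3, \<infinity>}"
    and "cox_rel n m r"
  shows "foldr (geom_act m) r x = x"
  using assms(3) unfolding cox_rel_def
proof (elim disjE exE conjE)
  fix s assume "r = [s, s]"
  then show ?thesis by (simp add: geom_act_def fun_eq_iff)
next
  fix s t k assume st: "s \<noteq> t" and k: "m s t = enat k" and r: "r = alt_word s t (2 * k)"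
  from entries[OF st] k consider "k = 2" | "k = 3"
    by (auto simp: numeral_eq_enat)
  then show ?thesis
  proof cases
    case 1
    then have "geom_coeff (m s t) = 0" "geom_coeff (m t s) = 0"
      using k sym[of s t] by (simp_all add: geom_coeff_def numeral_eq_enat)
    then show ?thesis using st unfolding r 1
      by (simp add: numeral_eq_Suc geom_act_def fun_eq_iff)
  next
    case 2
    then have "geom_coeff (m s t) = 1" "geom_coeff (m t s) = 1"
      using k sym[of s t] by (simp_all add: geom_coeff_def numeral_eq_enat)
    then show ?thesis using st unfolding r 2
      by (simp add: numeral_eq_Suc geom_act_def fun_eq_iff algebra_simps)
  qed
qed

definition W1_blocks :: "nat list list" where
  "W1_blocks = [[1, 2], [1, 2, 3], [1, 0, 2], [1, 0, 2, 3]]"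

definition W1_region :: "nat \<Rightarrow> (nat \<Rightarrow> int) set" where
  "W1_region p = {x.
     if p = 0 then
       x 0 + x 1 > 0 \<and> 2 * x 1 + x 2 + x 3 > 0 \<and> x 1 < 0 \<and> x 3 > 0 \<and> x 1 + x 2 > 0
     else if p = 1 then
       x 0 + x 1 > 0 \<and> 2 * x 1 + x 2 + x 3 < 0 \<and> x 3 > 0 \<and> 3 * x 1 + 2 * x 2 + x 3 > 0
     else if p = 2 then
       x 0 + x 1 < 0 \<and> 2 * x 1 + x 2 + x 3 > 0 \<and> 2 * x 1 + x 2 < 0 \<and> x 0 + 2 * x 1 + x 2 > 0
     else
       x 0 + x 1 < 0 \<and> 2 * x 1 + x 2 + x 3 < 0 \<and> x 3 > 0 \<and> x 0 + 2 * x 1 + x 2 > 0}"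

definition W2_blocks :: "nat list list" where
  "W2_blocks = [[0, 1], [0, 1, 2], [0, 1, 3], [0, 1, 2, 3]]"

definition W2_region :: "nat \<Rightarrow> (nat \<Rightarrow> int) set" where
  "W2_region p = {x.
     if p = 0 then
       2 * x 0 + x 1 + x 2 > 0 \<and> 2 * x 0 + x 1 + x 3 > 0 \<and> x 1 > 0 \<and> x 2 > 0 \<and> x 3 > 0
       \<and> x 0 + x 1 > 0
     else if p = 1 then
       2 * x 0 + x 1 + x 2 < 0 \<and> 2 * x 0 + x 1 + x 3 > 0 \<and> x 2 > 0 \<and> 3 * x 0 + 2 * x 1 + x 2 > 0
     else if p = 2 then
       2 * x 0 + x 1 + x 2 > 0 \<and> 2 * x 0 + x 1 + x 3 < 0 \<and> x 3 > 0 \<and> 3 * x 0 + 2 * x 1 + x 3 > 0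
     else
       2 * x 0 + x 1 + x 2 < 0 \<and> 2 * x 0 + x 1 + x 3 < 0 \<and> 2 * x 0 + x 1 + x 2 + x 3 > 0
       \<and> 4 * x 0 + 3 * x 1 > 0}"

lemma ping_pong_W1:
  "ping_pong 4 m_W1 (geom_act m_W1) {..<4} ((!) W1_blocks) W1_region (\<lambda>_. 1)"
proof
  show "foldr (geom_act m_W1) r x = x" if "cox_rel 4 m_W1 r" for r x
    by (rule geom_act_cox_rel[OF _ _ that]) (auto simp: m_W1_def insert_commute)
  show "foldr (geom_act m_W1) (W1_blocks ! p) x \<in> W1_region p"
    if "p \<in> {..<4}" "q \<in> {..<4}" "x \<in> W1_region q" for p q x
    using that unfolding lessThan_iff less_4_cases
    by (elim disjE)
      (auto simp: W1_blocks_def W1_region_def geom_act_def geom_coeff_def m_W1_def doubleton_eq_iff)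
  show "foldr (geom_act m_W1) (W1_blocks ! p) (\<lambda>_. 1) \<in> W1_region p" if "p \<in> {..<4}" for p
    using that unfolding lessThan_iff less_4_cases
    by (elim disjE)
      (auto simp: W1_blocks_def W1_region_def geom_act_def geom_coeff_def m_W1_def doubleton_eq_iff)
  show "W1_region p \<inter> W1_region q = {}" if "p \<in> {..<4}" "q \<in> {..<4}" "p \<noteq> q" for p q
    using that unfolding lessThan_iff less_4_cases
    by (elim disjE) (auto simp: W1_region_def)
qed (auto simp: W1_blocks_def cox_words_def less_4_cases)

lemma ping_pong_W2:
  "ping_pong 4 m_W2 (geom_act m_W2) {..<4} ((!) W2_blocks) W2_region (\<lambda>_. 1)"
proof
  show "foldr (geom_act m_W2) r x = x" if "cox_rel 4 m_W2 r" for r x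
    by (rule geom_act_cox_rel[OF _ _ that]) (auto simp: m_W2_def insert_commute)
  show "foldr (geom_act m_W2) (W2_blocks ! p) x \<in> W2_region p"
    if "p \<in> {..<4}" "q \<in> {..<4}" "x \<in> W2_region q" for p q x
    using that unfolding lessThan_iff less_4_cases
    by (elim disjE)
      (auto simp: W2_blocks_def W2_region_def geom_act_def geom_coeff_def m_W2_def doubleton_eq_iff)
  show "foldr (geom_act m_W2) (W2_blocks ! p) (\<lambda>_. 1) \<in> W2_region p" if "p \<in> {..<4}" for p
    using that unfolding lessThan_iff less_4_cases
    by (elim disjE)
      (auto simp: W2_blocks_def W2_region_def geom_act_def geom_coeff_def m_W2_def doubleton_eq_iff)
  show "W2_region p \<inter> W2_region q = {}" if "p \<in> {..<4}" "q \<in> {..<4}" "p \<noteq> q" for p q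
    using that unfolding lessThan_iff less_4_cases
    by (elim disjE) (auto simp: W2_region_def)
qed (auto simp: W2_blocks_def cox_words_def less_4_cases)

lemma growth_rate_W1_ge: "ereal (8/5) \<le> growth_rate 4 m_W1"
  using ping_pong_W1 by (rule ping_pong_growth_rate_ge) (simp add: W1_blocks_def upt_rec)

lemma growth_rate_W2_ge: "ereal (8/5) \<le> growth_rate 4 m_W2"
  using ping_pong_W2 by (rule ping_pong_growth_rate_ge) (simp add: W2_blocks_def upt_rec)

section \<open>An automaton bound for W0\<close>

definition shortlex_reducible :: "nat \<Rightarrow> (nat \<Rightarrow> nat \<Rightarrow> enat) \<Rightarrow> nat list \<Rightarrow> bool" where
  "shortlex_reducible n m f \<longleftrightarrow> (\<exists>f' \<in> cox_words n. cox_eq n m f' f \<and> (f', f) \<in> lenlex less_than)"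

lemma growth_coeff_le_card_avoiding:
  assumes reducible: "\<And>f. f \<in> F \<Longrightarrow> shortlex_reducible n m f"
  shows "growth_coeff n m k \<le> card {w \<in> cox_words n. length w = k \<and> (\<forall>f \<in> F. \<not> sublist f w)}"
proof -
  let ?A = "{w \<in> cox_words n. length w = k \<and> (\<forall>f \<in> F. \<not> sublist f w)}"
  have finite_A: "finite ?A"
    by (rule finite_subset[OF _ finite_cox_words_length_le[of n k]]) auto
  have "cox_elem n m ` reduced_words n m k \<subseteq> cox_elem n m ` ?A"
  proof
    fix e assume "e \<in> cox_elem n m ` reduced_words n m k"
    then obtain w where w: "w \<in> reduced_words n m k" "e = cox_elem n m w" by blast
    then have "w \<in> cox_words n" by (simp add: reduced_words_def)
    then obtain v where v: "v \<in> reduced_words n m (length v)" "cox_eq n m v w" "length v \<le> length w"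
      and least: "\<And>u. u \<in> cox_words n \<Longrightarrow> cox_eq n m u w \<Longrightarrow> (u, v) \<notin> lenlex less_than"
      by (rule shortlex_min_rep[where m = m]) auto
    have "length v = k" using v w(1) by (force simp: reduced_words_def)
    have "\<not> sublist f v" if f: "f \<in> F" for f
    proof
      assume "sublist f v"
      then obtain x y where v_split: "v = x @ f @ y" by (auto simp: sublist_def)
      obtain f' where f': "f' \<in> cox_words n" "cox_eq n m f' f" "(f', f) \<in> lenlex less_than"
        using reducible[OF f] by (auto simp: shortlex_reducible_def)
      have "x @ f' @ y \<in> cox_words n"
        using v(1) f'(1) v_split by (simp add: reduced_words_def cox_words_def)
      moreover have "cox_eq n m (x @ f' @ y) w"
        using cox_eq_append_context[OF f'(2)] v(2) v_split by (metis cox_eq.trans)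
      moreover have "(x @ f' @ y, v) \<in> lenlex less_than"
        using lenlex_append1[OF f'(3), of y y] v_split by (simp add: irrefl_less_than)
      ultimately show False using least by blast
    qed
    then have "v \<in> ?A" using v(1) \<open>length v = k\<close> by (simp add: reduced_words_def)
    moreover have "e = cox_elem n m v" using w(2) cox_elem_cong[OF v(2)] by simp
    ultimately show "e \<in> cox_elem n m ` ?A" by blast
  qed
  then have "growth_coeff n m k \<le> card (cox_elem n m ` ?A)"
    unfolding growth_coeff_eq_card_reduced_words using finite_A by (intro card_mono finite_imageI)
  also have "\<dots> \<le> card ?A" using finite_A by (rule card_image_le)
  finally show ?thesis .
qed

fun accepts :: "('q \<Rightarrow> nat \<Rightarrow> 'q option) \<Rightarrow> 'q \<Rightarrow> nat list \<Rightarrow> bool" where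
  "accepts \<delta> q [] = True"
| "accepts \<delta> q (a # w) = (case \<delta> q a of None \<Rightarrow> False | Some q' \<Rightarrow> accepts \<delta> q' w)"

text \<open>State q remembers the suffix lbl q of the word read so far. A transition may forget part of
  that suffix, and it may only reject when a factor from F has just been completed.\<close>

lemma accepts_if_avoiding:
  assumes step: "\<And>q a. q \<in> Q \<Longrightarrow> a < n \<Longrightarrow> (case \<delta> q a of
      None \<Rightarrow> \<exists>f \<in> F. suffix f (lbl q @ [a])
    | Some q' \<Rightarrow> q' \<in> Q \<and> suffix (lbl q') (lbl q @ [a]))"
  shows "q \<in> Q \<Longrightarrow> w \<in> lists {..<n} \<Longrightarrow> \<forall>f \<in> F. \<not> sublist f (lbl q @ w) \<Longrightarrow> accepts \<delta> q w"
proof (induction w arbitrary: q)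
  case (Cons a w)
  have a: "a < n" using Cons.prems(2) by simp
  show ?case
  proof (cases "\<delta> q a")
    case None
    then obtain f zs where "f \<in> F" "lbl q @ [a] = zs @ f"
      using step[OF Cons.prems(1) a] by (auto elim: suffixE)
    then have "sublist f (lbl q @ a # w)"
      unfolding sublist_def by (metis append_assoc append_Cons append_Nil)
    with Cons.prems(3) \<open>f \<in> F\<close> show ?thesis by blast
  next
    case (Some q')
    with step[OF Cons.prems(1) a] obtain zs where q': "q' \<in> Q" "lbl q @ [a] = zs @ lbl q'"
      by (auto elim: suffixE)
    have "sublist (lbl q' @ w) (lbl q @ a # w)"
      using q'(2) by (metis append_assoc append_Cons append_Nil sublist_append_leftI)
    then have "\<forall>f \<in> F. \<not> sublist f (lbl q' @ w)"
      using Cons.prems(3) sublist_order.order.trans by blast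
    then show ?thesis using Cons.IH[OF q'(1)] Cons.prems(2) Some by simp
  qed
qed simp

definition accepted_words :: "('q \<Rightarrow> nat \<Rightarrow> 'q option) \<Rightarrow> nat \<Rightarrow> 'q \<Rightarrow> nat \<Rightarrow> nat list set" where
  "accepted_words \<delta> n q k = {w \<in> lists {..<n}. length w = k \<and> accepts \<delta> q w}"

lemma finite_accepted_words: "finite (accepted_words \<delta> n q k)"
  unfolding accepted_words_def
  by (rule finite_subset[OF _ finite_lists_length_eq[of "{..<n}" k]]) auto

lemma card_accepted_words_Suc_le:
  "card (accepted_words \<delta> n q (Suc k))
     \<le> (\<Sum>a<n. case \<delta> q a of None \<Rightarrow> 0 | Some q' \<Rightarrow> card (accepted_words \<delta> n q' k))"
proof -
  define B where
    "B a = (case \<delta> q a of None \<Rightarrow> {} | Some q' \<Rightarrow> Cons a ` accepted_words \<delta> n q' k)" for a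
  have card_B:
    "card (B a) \<le> (case \<delta> q a of None \<Rightarrow> 0 | Some q' \<Rightarrow> card (accepted_words \<delta> n q' k))" for a
    by (cases "\<delta> q a") (simp_all add: B_def card_image_le finite_accepted_words)
  have "accepted_words \<delta> n q (Suc k) \<subseteq> (\<Union>a<n. B a)"
  proof
    fix w assume w: "w \<in> accepted_words \<delta> n q (Suc k)"
    then obtain a w' where aw: "w = a # w'" by (cases w) (auto simp: accepted_words_def)
    with w obtain q' where "a < n" "\<delta> q a = Some q'" "w' \<in> accepted_words \<delta> n q' k"
      by (auto simp: accepted_words_def split: option.splits)
    then have "w \<in> B a" using aw by (simp add: B_def)
    with \<open>a < n\<close> show "w \<in> (\<Union>a<n. B a)" by blast
  qed
  moreover have "finite (B a)" for a
    by (cases "\<delta> q a") (simp_all add: B_def finite_accepted_words)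
  ultimately have "card (accepted_words \<delta> n q (Suc k)) \<le> card (\<Union>a<n. B a)"
    by (intro card_mono) auto
  also have "\<dots> \<le> (\<Sum>a<n. card (B a))"
    by (rule card_UN_le) simp
  also have "\<dots> \<le> (\<Sum>a<n. case \<delta> q a of None \<Rightarrow> 0 | Some q' \<Rightarrow> card (accepted_words \<delta> n q' k))"
    using card_B by (rule sum_mono)
  finally show ?thesis .
qed

lemma card_accepted_words_le:
  assumes closed: "\<And>q a q'. q \<in> Q \<Longrightarrow> a < n \<Longrightarrow> \<delta> q a = Some q' \<Longrightarrow> q' \<in> Q"
    and weight_ge_1: "\<And>q. q \<in> Q \<Longrightarrow> 1 \<le> wt q"
    and weight_step: "\<And>q. q \<in> Q \<Longrightarrow> (\<Sum>a<n. case \<delta> q a of None \<Rightarrow> 0 | Some q' \<Rightarrow> wt q') \<le> c * wt q"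
  shows "q \<in> Q \<Longrightarrow> real (card (accepted_words \<delta> n q k)) \<le> wt q * c ^ k"
proof (induction k arbitrary: q)
  case 0
  have "accepted_words \<delta> n q 0 = {[]}" by (auto simp: accepted_words_def)
  then show ?case using weight_ge_1[OF 0] by simp
next
  case (Suc k)
  let ?wt = "\<lambda>a. case \<delta> q a of None \<Rightarrow> 0 | Some q' \<Rightarrow> wt q'"
  have "0 \<le> (\<Sum>a<n. ?wt a)"
    using closed[OF Suc.prems] weight_ge_1 by (intro sum_nonneg) (fastforce split: option.splits)
  then have "0 \<le> c"
    using weight_step[OF Suc.prems] weight_ge_1[OF Suc.prems] by (smt (verit) zero_le_mult_iff)
  have "real (card (accepted_words \<delta> n q (Suc k)))
      \<le> (\<Sum>a<n. real (case \<delta> q a of None \<Rightarrow> 0 | Some q' \<Rightarrow> card (accepted_words \<delta> n q' k)))"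
    unfolding of_nat_sum[symmetric] of_nat_le_iff by (rule card_accepted_words_Suc_le)
  also have "\<dots> \<le> (\<Sum>a<n. ?wt a * c ^ k)"
    using closed[OF Suc.prems] Suc.IH by (intro sum_mono) (simp split: option.splits)
  also have "\<dots> = (\<Sum>a<n. ?wt a) * c ^ k"
    by (simp add: sum_distrib_right)
  also have "\<dots> \<le> c * wt q * c ^ k"
    using weight_step[OF Suc.prems] \<open>0 \<le> c\<close> by (intro mult_right_mono) simp_all
  finally show ?case by (simp add: algebra_simps)
qed

definition W0_reductions :: "(nat list \<times> nat list) list" where
  "W0_reductions =
    [([0, 0], []), ([1, 1], []), ([2, 0], [0, 2]), ([2, 2], []), ([3, 0], [0, 3]), ([3, 1], [1, 3]),
     ([3, 3], []), ([2, 1, 2], [1, 2, 1]), ([3, 2, 3], [2, 3, 2]), ([2, 1, 0, 2], [1, 2, 1, 0]),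
     ([3, 2, 1, 3], [2, 3, 2, 1]), ([3, 2, 1, 0, 3], [2, 3, 2, 1, 0]),
     ([2, 1, 0, 1, 2, 1], [1, 2, 1, 0, 1, 2]), ([3, 2, 1, 0, 1, 3], [2, 3, 2, 1, 0, 1])]"

lemma cox_eq_W0_move:
  assumes "(l, r) \<in> {([s, t], [t, s]) | s t. {s, t} \<in> {{0, 2}, {0, 3}, {1, 3}}}
    \<union> {([s, t, s], [t, s, t]) | s t. {s, t} \<in> {{1, 2}, {2, 3}}}"
  shows "cox_eq 4 m_W0 (x @ l @ y) (x @ r @ y)"
proof -
  have "cox_eq 4 m_W0 l r"
    using assms by (auto intro!: cox_eq_commute cox_eq_braid simp: m_W0_def doubleton_eq_iff)
  then show ?thesis by (rule cox_eq_append_context)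
qed

lemma W0_long_reductions:
  shows "cox_eq 4 m_W0 [2, 1, 0, 2] [1, 2, 1, 0]"
    and "cox_eq 4 m_W0 [3, 2, 1, 3] [2, 3, 2, 1]"
    and "cox_eq 4 m_W0 [3, 2, 1, 0, 3] [2, 3, 2, 1, 0]"
    and "cox_eq 4 m_W0 [2, 1, 0, 1, 2, 1] [1, 2, 1, 0, 1, 2]"
    and "cox_eq 4 m_W0 [3, 2, 1, 0, 1, 3] [2, 3, 2, 1, 0, 1]"
proof -
  note [trans] = cox_eq.trans
  have "cox_eq 4 m_W0 [2, 1, 0, 2] [2, 1, 2, 0]"
    using cox_eq_W0_move[of "[0, 2]" "[2, 0]" "[2, 1]" "[]"] by (simp add: insert_commute)
  also have "cox_eq 4 m_W0 \<dots> [1, 2, 1, 0]"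
    using cox_eq_W0_move[of "[2, 1, 2]" "[1, 2, 1]" "[]" "[0]"] by (simp add: insert_commute)
  finally show "cox_eq 4 m_W0 [2, 1, 0, 2] [1, 2, 1, 0]" .
  have "cox_eq 4 m_W0 [3, 2, 1, 3] [3, 2, 3, 1]"
    using cox_eq_W0_move[of "[1, 3]" "[3, 1]" "[3, 2]" "[]"] by (simp add: insert_commute)
  also have "cox_eq 4 m_W0 \<dots> [2, 3, 2, 1]"
    using cox_eq_W0_move[of "[3, 2, 3]" "[2, 3, 2]" "[]" "[1]"] by (simp add: insert_commute)
  finally show "cox_eq 4 m_W0 [3, 2, 1, 3] [2, 3, 2, 1]" .
  have "cox_eq 4 m_W0 [3, 2, 1, 0, 3] [3, 2, 1, 3, 0]"
    using cox_eq_W0_move[of "[0, 3]" "[3, 0]" "[3, 2, 1]" "[]"] by (simp add: insert_commute)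
  also have "cox_eq 4 m_W0 \<dots> [3, 2, 3, 1, 0]"
    using cox_eq_W0_move[of "[1, 3]" "[3, 1]" "[3, 2]" "[0]"] by (simp add: insert_commute)
  also have "cox_eq 4 m_W0 \<dots> [2, 3, 2, 1, 0]"
    using cox_eq_W0_move[of "[3, 2, 3]" "[2, 3, 2]" "[]" "[1, 0]"] by (simp add: insert_commute)
  finally show "cox_eq 4 m_W0 [3, 2, 1, 0, 3] [2, 3, 2, 1, 0]" .
  have "cox_eq 4 m_W0 [2, 1, 0, 1, 2, 1] [2, 1, 0, 2, 1, 2]"
    using cox_eq_W0_move[of "[1, 2, 1]" "[2, 1, 2]" "[2, 1, 0]" "[]"] by (simp add: insert_commute)
  also have "cox_eq 4 m_W0 \<dots> [2, 1, 2, 0, 1, 2]"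
    using cox_eq_W0_move[of "[0, 2]" "[2, 0]" "[2, 1]" "[1, 2]"] by (simp add: insert_commute)
  also have "cox_eq 4 m_W0 \<dots> [1, 2, 1, 0, 1, 2]"
    using cox_eq_W0_move[of "[2, 1, 2]" "[1, 2, 1]" "[]" "[0, 1, 2]"] by (simp add: insert_commute)
  finally show "cox_eq 4 m_W0 [2, 1, 0, 1, 2, 1] [1, 2, 1, 0, 1, 2]" .
  have "cox_eq 4 m_W0 [3, 2, 1, 0, 1, 3] [3, 2, 1, 0, 3, 1]"
    using cox_eq_W0_move[of "[1, 3]" "[3, 1]" "[3, 2, 1, 0]" "[]"] by (simp add: insert_commute)
  also have "cox_eq 4 m_W0 \<dots> [3, 2, 1, 3, 0, 1]"
    using cox_eq_W0_move[of "[0, 3]" "[3, 0]" "[3, 2, 1]" "[1]"] by (simp add: insert_commute)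
  also have "cox_eq 4 m_W0 \<dots> [3, 2, 3, 1, 0, 1]"
    using cox_eq_W0_move[of "[1, 3]" "[3, 1]" "[3, 2]" "[0, 1]"] by (simp add: insert_commute)
  also have "cox_eq 4 m_W0 \<dots> [2, 3, 2, 1, 0, 1]"
    using cox_eq_W0_move[of "[3, 2, 3]" "[2, 3, 2]" "[]" "[1, 0, 1]"] by (simp add: insert_commute)
  finally show "cox_eq 4 m_W0 [3, 2, 1, 0, 1, 3] [2, 3, 2, 1, 0, 1]" .
qed

lemma W0_reductions_cox_eq:
  assumes "(f, f') \<in> set W0_reductions"
  shows "cox_eq 4 m_W0 f f'"
proof -
  have "cox_eq 4 m_W0 [s, s] []" if "s < 4" for s
    using that cox_eq.rel[of 4 m_W0 "[s, s]" "[]" "[]"] by (simp add: cox_rel_def)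
  then show ?thesis
    using assms W0_long_reductions cox_eq_W0_move[where x = "[]" and y = "[]"]
    by (auto simp: W0_reductions_def insert_commute)
qed

text \<open>The states are the proper prefixes of the factors in W0_reductions, as in the Aho-Corasick
  automaton. The weights satisfy M w \<le> (31/20) w for the transition matrix M, certifying that its
  spectral radius is at most 31/20.\<close>

definition W0_state_words :: "nat list list" where
  "W0_state_words = [[], [0], [1], [2], [3], [2, 1], [3, 2], [2, 1, 0], [3, 2, 1], [2, 1, 0, 1],
     [3, 2, 1, 0], [2, 1, 0, 1, 2], [3, 2, 1, 0, 1]]"

definition W0_transitions :: "nat option list list" where
  "W0_transitions =
    [[Some 1, Some 2, Some 3, Some 4], [None, Some 2, Some 3, Some 4],
     [Some 1, None, Some 3, Some 4], [None, Some 5, None, Some 4], [None, None, Some 6, None],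
     [Some 7, None, None, Some 4], [None, Some 8, None, None], [None, Some 9, None, Some 4],
     [Some 10, None, None, None], [Some 1, None, Some 11, Some 4], [None, Some 12, None, None],
     [None, None, None, Some 4], [Some 1, None, Some 11, None]]"

definition W0_next :: "nat \<Rightarrow> nat \<Rightarrow> nat option" where
  "W0_next q a = W0_transitions ! q ! a"

definition W0_weights :: "real list" where
  "W0_weights = [1000, 605, 605, 242, 79, 291, 121, 366, 184, 481, 281, 52, 430]"

lemma W0_next_step:
  assumes "q \<in> {..<13}" "a < 4"
  shows "case W0_next q a of
      None \<Rightarrow> \<exists>f \<in> fst ` set W0_reductions. suffix f (W0_state_words ! q @ [a])
    | Some q' \<Rightarrow> q' \<in> {..<13} \<and> suffix (W0_state_words ! q') (W0_state_words ! q @ [a])"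
proof -
  have "list_all (\<lambda>q. list_all (\<lambda>a. case W0_next q a of
      None \<Rightarrow> \<exists>f \<in> fst ` set W0_reductions. suffix f (W0_state_words ! q @ [a])
    | Some q' \<Rightarrow> q' \<in> {..<13} \<and> suffix (W0_state_words ! q') (W0_state_words ! q @ [a]))
      [0..<4]) [0..<13]"
    by code_simp
  then show ?thesis using assms by (simp add: list_all_iff)
qed

lemma W0_weight_step:
  assumes "q \<in> {..<13}"
  shows "1 \<le> W0_weights ! q"
    and "(\<Sum>a<4. case W0_next q a of None \<Rightarrow> 0 | Some q' \<Rightarrow> W0_weights ! q') \<le> 31/20 * W0_weights ! q"
proof -
  have "list_all (\<lambda>q. 1 \<le> W0_weights ! q \<and>
      (\<Sum>a<4. case W0_next q a of None \<Rightarrow> 0 | Some q' \<Rightarrow> W0_weights ! q') \<le> 31/20 * W0_weights ! q)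
      [0..<13]"
    by code_simp
  then show "1 \<le> W0_weights ! q"
    and "(\<Sum>a<4. case W0_next q a of None \<Rightarrow> 0 | Some q' \<Rightarrow> W0_weights ! q') \<le> 31/20 * W0_weights ! q"
    using assms by (simp_all add: list_all_iff)
qed

lemma W0_reductions_shortlex:
  "(f, f') \<in> set W0_reductions \<Longrightarrow> f' \<in> cox_words 4 \<and> (f', f) \<in> lenlex less_than"
  by (auto simp: W0_reductions_def cox_words_def lenlex_conv)

lemma growth_coeff_W0_le: "real (growth_coeff 4 m_W0 k) \<le> 1000 * (31/20) ^ k"
proof -
  let ?F = "fst ` set W0_reductions"
  let ?avoiding = "{w \<in> cox_words 4. length w = k \<and> (\<forall>f \<in> ?F. \<not> sublist f w)}"
  let ?accepted = "accepted_words W0_next 4 0 k"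
  have "shortlex_reducible 4 m_W0 f" if "f \<in> ?F" for f
    using that W0_reductions_shortlex W0_reductions_cox_eq
    by (force simp: shortlex_reducible_def intro: cox_eq.sym)
  then have "growth_coeff 4 m_W0 k \<le> card ?avoiding"
    by (rule growth_coeff_le_card_avoiding)
  also have "\<dots> \<le> card ?accepted"
  proof (rule card_mono)
    show "finite ?accepted" by (rule finite_accepted_words)
    have "W0_state_words ! 0 = []" by (simp add: W0_state_words_def)
    then show "?avoiding \<subseteq> ?accepted"
      using accepts_if_avoiding[where Q = "{..<13}" and n = 4 and lbl = "(!) W0_state_words" and q = 0,
          OF W0_next_step]
      by (auto simp: cox_words_def accepted_words_def)
  qed
  finally have "real (growth_coeff 4 m_W0 k) \<le> real (card ?accepted)" by simp
  also have "\<dots> \<le> W0_weights ! 0 * (31/20) ^ k"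
    using W0_next_step W0_weight_step
    by (intro card_accepted_words_le[where Q = "{..<13}"]) (fastforce split: option.splits)+
  finally show ?thesis by (simp add: W0_weights_def)
qed

lemma growth_rate_W0_le: "growth_rate 4 m_W0 \<le> ereal (31/20)"
  by (rule growth_rate_le[OF growth_coeff_W0_le]) simp_all

theorem lemma3p1:
  shows "growth_rate 4 m_W0 < growth_rate 4 m_W1 \<and> growth_rate 4 m_W0 < growth_rate 4 m_W2"
proof -
  have "growth_rate 4 m_W0 < ereal (8/5)"
    using growth_rate_W0_le by (rule le_less_trans) simp
  then show ?thesis
    using growth_rate_W1_ge growth_rate_W2_ge by (auto intro: less_le_trans)
qed

end
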